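(* There does not exist any function $\Phi$ on $[0,\infty)$ with $\Phi(t)=o(t^{-3/2})$ as $t\to+\infty$ such that, for each $f^{in}\in L^2(\mathbb T^2\times\mathbb S^1)$, the solution $F$ of the Cauchy problem $$(\partial_t+\omega\cdot\nabla_x-\partial_s)F=\int_{-1}^12P(2s,h|h')F(t,x,R[\theta(h')]\omega,0,h')\,dh',\qquad F(0,x,\omega,s,h)=f^{in}(x,\omega)E(s,h)$$ satisfies, for each $t\ge0$, $$\|F(t)-\langle f^{in}\rangle E\|_{L^2(\mathbb T^2\times\mathbb S^1\times[0,\infty)\times[-1,1])}\le\Phi(t)\|F(0)\|_{L^2(\mathbb T^2\times\mathbb S^1\times[0,\infty)\times[-1,1])},$$ where $\langle\phi\rangle=\frac1{2\pi}\iint_{\mathbb T^2\times\mathbb S^1}\phi\,dx\,d\omega$.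
   Context: $\mathbb T^2=\mathbb R^2/\mathbb Z^2$. $R[\theta]$ is rotation by angle $\theta$, $\theta(h)=\pi-2\arcsin h$. $P(S,h|h')$ is defined by $$P(S,h|h')=\frac{3}{\pi^2 S\eta}\Big((S\eta)\wedge(1-S)_+ +(\eta S-|1-S|)_+ +\big((S-\tfrac12S\eta)\wedge(1+\tfrac12S\eta)-(\tfrac12S+\tfrac12S\zeta)\vee1\big)_+ +\big((S-\tfrac12S\eta)\wedge1-(\tfrac12S+\tfrac12S\zeta)\vee(1-\tfrac12S\eta)\big)_+\Big),$$ $\zeta=\tfrac12|h+h'|$, $\eta=\tfrac12|h-h'|$, $\wedge=\min$, $\vee=\max$, $z_+=\max(z,0)$; $E(s,h)=\int_{2s}^\infty\int_{-1}^1P(\tau,h|h')\,dh'\,d\tau$. The solution of the Cauchy problem is $F(t)=K_tF(0)$, where $(K_t)_{t\ge0}$ is the strongly continuous, positivity-preserving linear contraction semigroup on $L^1(\mathbb T^2\times\mathbb S^1\times[0,\infty)\times[-1,1])$ generated by the equation. *)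

theory Defs
  imports "HOL-Analysis.Analysis" "HOL-Library.Landau_Symbols"
begin

text \<open>The torus T^2 = R^2/Z^2 is represented by the fundamental cell [0,1)^2 (points of R x R),
  the circle S^1 by the angle phi in [0,2 pi) with omega = (cos phi, sin phi) and d omega = d phi.
  The rotation R[theta] acts on the angle by phi |-> phi + theta (mod 2 pi).
  A function of (t, x, omega, s, h) is a curried real function of (t, x, phi, s, h).\<close>

definition pos :: "real \<Rightarrow> real" where
  "pos z = max z 0"

definition theta :: "real \<Rightarrow> real" where
  "theta h = pi - 2 * arcsin h"

definition Pk :: "real \<Rightarrow> real \<Rightarrow> real \<Rightarrow> real" where
  "Pk S h h' =
    (let \<zeta> = \<bar>h + h'\<bar> / 2; \<eta> = \<bar>h - h'\<bar> / 2 in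
     3 / (pi^2 * S * \<eta>) *
      ( min (S * \<eta>) (pos (1 - S))
      + pos (\<eta> * S - \<bar>1 - S\<bar>)
      + pos (min (S - S * \<eta> / 2) (1 + S * \<eta> / 2) - max (S / 2 + S * \<zeta> / 2) 1)
      + pos (min (S - S * \<eta> / 2) 1 - max (S / 2 + S * \<zeta> / 2) (1 - S * \<eta> / 2))))"

definition Efun :: "real \<Rightarrow> real \<Rightarrow> real" where
  "Efun s h = set_lebesgue_integral lborel (atLeast (2 * s)) (\<lambda>\<tau>. LINT h':{-1..1}|lborel. Pk \<tau> h h')"

definition cell :: "(real \<times> real) set" where
  "cell = {0..<1} \<times> {0..<1}"

definition angn :: "real \<Rightarrow> real" where
  "angn a = a - 2 * pi * of_int \<lfloor>a / (2 * pi)\<rfloor>"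

definition tshift :: "real \<times> real \<Rightarrow> real \<Rightarrow> real \<Rightarrow> real \<times> real" where
  "tshift x \<tau> \<phi> = (frac (fst x - \<tau> * cos \<phi>), frac (snd x - \<tau> * sin \<phi>))"

definition Dom0 :: "((real \<times> real) \<times> real) set" where
  "Dom0 = cell \<times> {0..<2 * pi}"

definition Dom :: "((real \<times> real) \<times> real \<times> real \<times> real) set" where
  "Dom = cell \<times> {0..<2 * pi} \<times> atLeast 0 \<times> {-1..1}"

type_synonym state = "real \<Rightarrow> real \<times> real \<Rightarrow> real \<Rightarrow> real \<Rightarrow> real \<Rightarrow> real"

definition gain_integrand :: "state \<Rightarrow> real \<Rightarrow> real \<times> real \<Rightarrow> real \<Rightarrow> real \<Rightarrow> real \<Rightarrow> real \<Rightarrow> real" where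
  "gain_integrand F t x \<phi> s h h' = 2 * Pk (2 * s) h h' * F t x (angn (\<phi> + theta h')) 0 h'"

definition gain :: "state \<Rightarrow> real \<Rightarrow> real \<times> real \<Rightarrow> real \<Rightarrow> real \<Rightarrow> real \<Rightarrow> real" where
  "gain F t x \<phi> s h = (LINT h':{-1..1}|lborel. gain_integrand F t x \<phi> s h h')"

definition L2_data :: "(real \<times> real \<Rightarrow> real \<Rightarrow> real) \<Rightarrow> bool" where
  "L2_data f \<longleftrightarrow> (\<lambda>(x, \<phi>). f x \<phi>) \<in> borel_measurable borel
     \<and> (\<integral>\<^sup>+ u. indicator Dom0 u * ennreal ((case u of (x, \<phi>) \<Rightarrow> f x \<phi>)^2) \<partial>lborel) < \<infinity>"

text \<open>Mild (Duhamel, along characteristics) solution of the Cauchy problem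
  (d_t + omega . grad_x - d_s) F = int_{-1}^1 2 P(2s,h|h') F(t,x,R[theta(h')]omega,0,h') dh',
  F(0,x,omega,s,h) = f(x,omega) E(s,h),
  in the class of measurable functions whose trace at s = 0 is L^1 locally uniformly in t.\<close>
definition is_solution :: "(real \<times> real \<Rightarrow> real \<Rightarrow> real) \<Rightarrow> state \<Rightarrow> bool" where
  "is_solution f F \<longleftrightarrow>
     (\<lambda>(t, x, \<phi>, s, h). F t x \<phi> s h) \<in> borel_measurable borel
   \<and> (\<forall>t\<ge>0. \<forall>x\<in>cell. \<forall>\<phi>\<in>{0..<2 * pi}. \<forall>s\<ge>0. \<forall>h\<in>{-1..1}.
        set_integrable lborel {-1..1} (gain_integrand F t x \<phi> s h))
   \<and> (\<forall>t\<ge>0. \<forall>x\<in>cell. \<forall>\<phi>\<in>{0..<2 * pi}. \<forall>s\<ge>0. \<forall>h\<in>{-1..1}.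
        set_integrable lborel {0..t} (\<lambda>\<tau>. gain F (t - \<tau>) (tshift x \<tau> \<phi>) \<phi> (s + \<tau>) h)
      \<and> F t x \<phi> s h = f (tshift x t \<phi>) \<phi> * Efun (s + t) h
          + (LINT \<tau>:{0..t}|lborel. gain F (t - \<tau>) (tshift x \<tau> \<phi>) \<phi> (s + \<tau>) h))
   \<and> (\<forall>T\<ge>0. \<exists>C. \<forall>t\<in>{0..T}.
        (\<integral>\<^sup>+ u. indicator (cell \<times> {0..<2 * pi} \<times> {-1..1}) u
            * ennreal \<bar>case u of (x, \<phi>, h) \<Rightarrow> F t x \<phi> 0 h\<bar> \<partial>lborel) \<le> ennreal C)"

definition mean :: "(real \<times> real \<Rightarrow> real \<Rightarrow> real) \<Rightarrow> real" where
  "mean f = (1 / (2 * pi)) * (LINT u:Dom0|lborel. (case u of (x, \<phi>) \<Rightarrow> f x \<phi>))"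

definition L2sq :: "(real \<times> real \<Rightarrow> real \<Rightarrow> real \<Rightarrow> real \<Rightarrow> real) \<Rightarrow> ennreal" where
  "L2sq G = (\<integral>\<^sup>+ u. indicator Dom u * ennreal ((case u of (x, \<phi>, s, h) \<Rightarrow> G x \<phi> s h)^2) \<partial>lborel)"

end

theory Submission
  imports Defs
begin

text \<open>Take data \<open>f\<^sup>i\<^sup>n\<close> concentrated on an angular sector of width \<open>\<delta>\<close>. The gain term is
  nonnegative, so \<open>F(t) \<ge> f\<^sup>i\<^sup>n E(s + t, h)\<close>, and the kernel makes \<open>E(\<sigma>, h) \<gtrsim> 1/\<sigma>\<close> for
  \<open>h\<close> within \<open>1/\<sigma>\<close> of \<open>1\<close>. With \<open>\<delta> \<sim> 1/t\<close> the mean \<open>\<langle>f\<^sup>i\<^sup>n\<rangle> E\<close> is negligible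
  there, so \<open>\<parallel>F(t) - \<langle>f\<^sup>i\<^sup>n\<rangle>E\<parallel>\<^sup>2 \<gtrsim> \<delta>/t\<^sup>2\<close> while \<open>\<parallel>F(0)\<parallel>\<^sup>2 \<lesssim> \<delta>\<close>: any admissible
  rate obeys \<open>\<Phi>(t) \<gtrsim> 1/t\<close>. The solution needed to instantiate the hypothesis is obtained,
  for \<open>x\<close>-independent data, from a Neumann series for its trace at \<open>s = 0\<close>.\<close>

definition kernel_bracket :: "real \<Rightarrow> real \<Rightarrow> real \<Rightarrow> real" where
  "kernel_bracket S e z =
     min (S * e) (pos (1 - S)) + pos (e * S - \<bar>1 - S\<bar>)
   + pos (min (S - S * e / 2) (1 + S * e / 2) - max (S / 2 + S * z / 2) 1)
   + pos (min (S - S * e / 2) 1 - max (S / 2 + S * z / 2) (1 - S * e / 2))"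

lemma Pk_eq_kernel_bracket:
  "Pk S h h' = 3 / (pi^2 * S * (\<bar>h - h'\<bar> / 2)) * kernel_bracket S (\<bar>h - h'\<bar> / 2) (\<bar>h + h'\<bar> / 2)"
  by (simp add: Pk_def kernel_bracket_def Let_def)

lemma kernel_bracket_bounds:
  assumes "0 \<le> S" "0 \<le> e"
  shows "pos (e * S - \<bar>1 - S\<bar>) \<le> kernel_bracket S e z" and "kernel_bracket S e z \<le> 3 * (S * e)"
  using assms unfolding kernel_bracket_def pos_def
  by (auto simp: min_def max_def algebra_simps)

lemma kernel_bracket_large_S:
  assumes S: "4 \<le> S" and "0 \<le> e" "0 \<le> z" "e + z \<le> 1"
  shows "kernel_bracket S e z \<le> (if 1/2 \<le> e \<and> S * z < 1 then 2 else 0)"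
proof -
  define a b where "a = S * e" and "b = S * z"
  have ab: "0 \<le> a" "0 \<le> b" "a + b \<le> S"
    using assms mult_left_mono[of "e + z" 1 S] by (auto simp: a_def b_def algebra_simps)
  have half: "(1/2 \<le> e) = (S \<le> 2 * a)"
    using S by (auto simp: a_def field_simps)
  have "kernel_bracket S e z =
      min a (pos (1 - S)) + pos (a - \<bar>1 - S\<bar>)
    + pos (min (S - a / 2) (1 + a / 2) - max (S / 2 + b / 2) 1)
    + pos (min (S - a / 2) 1 - max (S / 2 + b / 2) (1 - a / 2))"
    by (simp add: kernel_bracket_def a_def b_def mult.commute)
  then show ?thesis
    unfolding half b_def[symmetric] using ab S by (auto simp: pos_def min_def max_def)
qed

lemma pi_squared_bounds: "9 < pi^2" "pi^2 < 16"
  using mult_strict_mono[of 3 pi 3 pi] mult_strict_mono[of pi 4 pi 4] pi_gt3 pi_less_4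
  by (simp_all add: power2_eq_square)

lemma Pk_nonneg: "0 \<le> S \<Longrightarrow> 0 \<le> Pk S h h'"
  using kernel_bracket_bounds(1)[of S "\<bar>h - h'\<bar> / 2" "\<bar>h + h'\<bar> / 2"]
  unfolding Pk_eq_kernel_bracket by (simp add: pos_def)

lemma Pk_le_1:
  assumes S: "0 \<le> S"
  shows "Pk S h h' \<le> 1"
proof -
  define e where "e = \<bar>h - h'\<bar> / 2"
  define k where "k = kernel_bracket S e (\<bar>h + h'\<bar> / 2)"
  have k: "0 \<le> k" "k \<le> 3 * (S * e)"
    using kernel_bracket_bounds[of S e] S by (auto simp: k_def e_def pos_def)
  have P: "Pk S h h' = 3 * k / (pi^2 * (S * e))"
    by (simp add: Pk_eq_kernel_bracket k_def e_def mult.assoc)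
  show ?thesis
  proof (cases "S * e = 0")
    case False
    then have "0 < S * e" using S by (simp add: e_def less_le)
    then have "3 * k / (pi^2 * (S * e)) \<le> 3 * (3 * (S * e)) / (9 * (S * e))"
      using pi_squared_bounds k by (intro frac_le mult_left_mono mult_right_mono) auto
    then show ?thesis using False by (simp add: P)
  qed (auto simp: P)
qed

lemma Pk_large_S:
  assumes S: "4 \<le> S" and "\<bar>h\<bar> \<le> 1" "\<bar>h'\<bar> \<le> 1"
  shows "Pk S h h' \<le> (if 2 / S \<le> \<bar>h + h'\<bar> then 0 else 2 / S)"
proof -
  define e z where "e = \<bar>h - h'\<bar> / 2" and "z = \<bar>h + h'\<bar> / 2"
  define k where "k = kernel_bracket S e z"
  have ez: "0 \<le> e" "0 \<le> z" "e + z \<le> 1"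
    using assms by (auto simp: e_def z_def abs_if field_simps)
  have k: "0 \<le> k" "k \<le> (if 1/2 \<le> e \<and> S * z < 1 then 2 else 0)"
    using kernel_bracket_bounds(1)[of S e z] kernel_bracket_large_S[OF S ez] ez S
    by (auto simp: k_def pos_def)
  have near: "(S * z < 1) = (\<bar>h + h'\<bar> < 2 / S)"
    using S by (auto simp: z_def field_simps)
  have P: "Pk S h h' = 3 * k / (pi^2 * (S * e))"
    by (simp add: Pk_eq_kernel_bracket k_def e_def z_def mult.assoc)
  show ?thesis
  proof (cases "1/2 \<le> e \<and> S * z < 1")
    case True
    then have "3 * k / (pi^2 * (S * e)) \<le> 3 * 2 / (9 * (S * (1/2)))"
      using pi_squared_bounds k S by (intro frac_le mult_left_mono mult_mono) auto
    also have "\<dots> \<le> 2 / S" using S by (simp add: field_simps)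
    finally show ?thesis using True near by (simp add: P)
  next
    case False
    then have "k = 0" using k by auto
    then show ?thesis using S by (simp add: P)
  qed
qed

lemma Pk_lower_bound:
  assumes \<sigma>: "1 \<le> \<sigma>" and \<tau>: "2 * \<sigma> \<le> \<tau>" "\<tau> \<le> 4 * \<sigma>"
    and h: "1 - 1 / (16 * \<sigma>) \<le> h" "h \<le> 1" and h': "-1 \<le> h'" "h' \<le> -1 + 1 / (16 * \<sigma>)"
  shows "1 / (30 * \<sigma>) \<le> Pk \<tau> h h'"
proof -
  define e where "e = \<bar>h - h'\<bar> / 2"
  define k where "k = kernel_bracket \<tau> e (\<bar>h + h'\<bar> / 2)"
  have small: "1 / (16 * \<sigma>) \<le> 1/16" using \<sigma> by (simp add: field_simps)
  have e: "1 - 1 / (16 * \<sigma>) \<le> e" "e \<le> 1"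
    using h h' small by (auto simp: e_def abs_if)
  have e0: "0 < e" using e small by linarith
  have "\<tau> * (1 - e) \<le> (4 * \<sigma>) * (1 / (16 * \<sigma>))"
    using e \<tau> \<sigma> by (intro mult_mono) auto
  then have "3/4 \<le> e * \<tau> - \<bar>1 - \<tau>\<bar>" using \<sigma> \<tau> by (simp add: algebra_simps)
  then have k: "3/4 \<le> k"
    using kernel_bracket_bounds(1)[of \<tau> e "\<bar>h + h'\<bar> / 2"] \<sigma> \<tau> e small
    unfolding k_def pos_def by linarith
  have "3 * (3/4) / (16 * (4 * \<sigma> * 1)) \<le> 3 * k / (pi^2 * (\<tau> * e))"
    using pi_squared_bounds k \<tau> e e0 \<sigma> by (intro frac_le mult_left_mono mult_mono) auto
  also have "\<dots> = Pk \<tau> h h'"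
    by (simp add: Pk_eq_kernel_bracket k_def e_def mult.assoc)
  finally show ?thesis using \<sigma> by (simp add: field_simps)
qed

lemma Pk_measurable[measurable (raw)]:
  assumes [measurable]: "f \<in> borel_measurable M" "g \<in> borel_measurable M" "k \<in> borel_measurable M"
  shows "(\<lambda>x. Pk (f x) (g x) (k x)) \<in> borel_measurable M"
  unfolding Pk_def pos_def Let_def by measurable

lemma integral_indicator_Icc_mult:
  "(l::real) \<le> u \<Longrightarrow> (\<integral>x. indicator {l..u} x * (c::real) \<partial>lborel) = c * (u - l)"
  by (simp add: integral_mult_left_zero mult.commute)

lemma integrable_indicator_Icc_mult[simp]:
  "integrable lborel (\<lambda>x. indicator {l..u::real} x * (c::real))"
  by (rule integrable_mult_left, rule integrable_real_indicator) (auto simp: emeasure_lborel_Icc_eq)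

lemma nn_integral_inverse_square_atLeast:
  fixes a b c :: real
  assumes "0 < a + b" "0 \<le> c"
  shows "(\<integral>\<^sup>+x. ennreal (c / (x + b)^2) * indicator {a..} x \<partial>lborel) = ennreal (c / (a + b))"
proof -
  have "(\<integral>\<^sup>+x. ennreal (c / (x + b)^2) * indicator {a..} x \<partial>lborel) = 0 - (- c / (a + b))"
  proof (rule nn_integral_FTC_atLeast)
    fix x assume "a \<le> x"
    then have "x + b \<noteq> 0" using assms by simp
    then show "((\<lambda>x. - c / (x + b)) has_real_derivative c / (x + b)^2) (at x)"
      by (auto intro!: derivative_eq_intros simp: power2_eq_square field_simps)
  next
    have "filterlim (\<lambda>x::real. x + b) at_top at_top"
      using filterlim_tendsto_add_at_top[OF tendsto_const[of b] filterlim_ident]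
      by (simp add: add.commute)
    then have "((\<lambda>x::real. c / (x + b)) \<longlongrightarrow> 0) at_top"
      by (intro tendsto_divide_0[OF tendsto_const] filterlim_at_top_imp_at_infinity)
    then show "((\<lambda>x::real. - c / (x + b)) \<longlongrightarrow> 0) at_top"
      using tendsto_minus by fastforce
  qed (use assms in auto)
  then show ?thesis by simp
qed

lemma has_bochner_integral_inverse_square_atLeast:
  fixes a b c :: real
  assumes "0 < a + b" "0 \<le> c"
  shows "has_bochner_integral lborel (\<lambda>x. indicator {a..} x * (c / (x + b)^2)) (c / (a + b))"
proof (rule has_bochner_integral_nn_integral)
  have "(\<integral>\<^sup>+x. ennreal (indicator {a..} x * (c / (x + b)^2)) \<partial>lborel)
      = (\<integral>\<^sup>+x. ennreal (c / (x + b)^2) * indicator {a..} x \<partial>lborel)"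
    by (intro nn_integral_cong) (simp add: indicator_def)
  then show "(\<integral>\<^sup>+x. ennreal (indicator {a..} x * (c / (x + b)^2)) \<partial>lborel) = ennreal (c / (a + b))"
    using nn_integral_inverse_square_atLeast[OF assms] by simp
qed (use assms in auto)

definition kernel_mass :: "real \<Rightarrow> real \<Rightarrow> real" where
  "kernel_mass \<tau> h = (LINT h':{-1..1}|lborel. Pk \<tau> h h')"

lemma kernel_mass_eq: "kernel_mass \<tau> h = (\<integral>h'. indicator {-1..1} h' * Pk \<tau> h h' \<partial>lborel)"
  by (simp add: kernel_mass_def set_lebesgue_integral_def)

lemma Efun_eq: "Efun s h = (\<integral>\<tau>. indicator {2 * s..} \<tau> * kernel_mass \<tau> h \<partial>lborel)"
  by (simp add: Efun_def kernel_mass_def set_lebesgue_integral_def)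

lemma kernel_mass_measurable[measurable (raw)]:
  assumes [measurable]: "f \<in> borel_measurable M" "g \<in> borel_measurable M"
  shows "(\<lambda>x. kernel_mass (f x) (g x)) \<in> borel_measurable M"
proof -
  have "(\<lambda>(s, h). kernel_mass s h) \<in> borel_measurable (borel \<Otimes>\<^sub>M borel)"
    unfolding kernel_mass_eq indicator_def atLeastAtMost_iff by measurable
  from measurable_compose[OF measurable_Pair[OF assms] this] show ?thesis by simp
qed

lemma Efun_measurable[measurable (raw)]:
  assumes [measurable]: "f \<in> borel_measurable M" "g \<in> borel_measurable M"
  shows "(\<lambda>x. Efun (f x) (g x)) \<in> borel_measurable M"
proof -
  have "(\<lambda>(s, h). Efun s h) \<in> borel_measurable (borel \<Otimes>\<^sub>M borel)"
    unfolding Efun_def kernel_mass_def set_lebesgue_integral_def indicator_def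
      atLeast_iff atLeastAtMost_iff by measurable
  from measurable_compose[OF measurable_Pair[OF assms] this] show ?thesis by simp
qed

lemma integrable_Pk: "0 \<le> \<tau> \<Longrightarrow> integrable lborel (\<lambda>h'. indicator {-1..1} h' * Pk \<tau> h h')"
  using integrableI_bounded_set_indicator[where M=lborel and A="{-1..1}" and B=1
      and f="\<lambda>h'. Pk \<tau> h h'"] Pk_nonneg Pk_le_1
  by (auto simp: emeasure_lborel_Icc_eq)

lemma kernel_mass_nonneg: "0 \<le> \<tau> \<Longrightarrow> 0 \<le> kernel_mass \<tau> h"
  unfolding kernel_mass_eq
  by (intro Bochner_Integration.integral_nonneg) (auto simp: Pk_nonneg indicator_def)

lemma kernel_mass_le_2:
  assumes \<tau>: "0 \<le> \<tau>"
  shows "kernel_mass \<tau> h \<le> 2"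
proof -
  have "kernel_mass \<tau> h \<le> (\<integral>h'. indicator {-1..1::real} h' * 1 \<partial>lborel)"
    unfolding kernel_mass_eq
    by (rule Bochner_Integration.integral_mono[OF integrable_Pk[OF \<tau>] integrable_indicator_Icc_mult])
       (auto simp: indicator_def Pk_le_1[OF \<tau>])
  then show ?thesis by (simp add: integral_indicator_Icc_mult)
qed

lemma kernel_mass_decay:
  assumes \<tau>: "4 \<le> \<tau>" and h: "\<bar>h\<bar> \<le> 1"
  shows "kernel_mass \<tau> h \<le> 8 / \<tau>^2"
proof -
  have "kernel_mass \<tau> h \<le> (\<integral>h'. indicator {-h - 2/\<tau> .. -h + 2/\<tau>} h' * (2/\<tau>) \<partial>lborel)"
    unfolding kernel_mass_eq
  proof (intro Bochner_Integration.integral_mono integrable_Pk integrable_indicator_Icc_mult)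
    fix h' :: real
    show "indicator {-1..1} h' * Pk \<tau> h h' \<le> indicator {-h - 2/\<tau> .. -h + 2/\<tau>} h' * (2/\<tau>)"
    proof (cases "\<bar>h'\<bar> \<le> 1")
      case True
      then show ?thesis
        using Pk_large_S[OF \<tau> h True] \<tau> by (auto simp: indicator_def abs_le_iff split: if_splits)
    qed (use \<tau> in \<open>auto simp: indicator_def\<close>)
  qed (use \<tau> in auto)
  also have "\<dots> = 8 / \<tau>^2"
    using \<tau> by (subst integral_indicator_Icc_mult) (auto simp: power2_eq_square field_simps)
  finally show ?thesis .
qed

lemma kernel_mass_le_majorant:
  assumes \<tau>: "0 \<le> \<tau>" and h: "\<bar>h\<bar> \<le> 1"
  shows "kernel_mass \<tau> h \<le> 128 / (\<tau> + 4)^2"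
proof (cases "\<tau> \<le> 4")
  case True
  have "(\<tau> + 4)^2 \<le> 8^2" using True \<tau> by (intro power_mono) auto
  then have "2 \<le> 128 / (\<tau> + 4)^2" using \<tau> by (simp add: field_simps)
  then show ?thesis using kernel_mass_le_2[OF \<tau>, of h] by linarith
next
  case False
  have "(\<tau> + 4)^2 \<le> (2 * \<tau>)^2" using False by (intro power_mono) auto
  then have "8 / \<tau>^2 \<le> 128 / (\<tau> + 4)^2" using False by (simp add: field_simps power2_eq_square)
  then show ?thesis using kernel_mass_decay[of \<tau> h] False h by linarith
qed

lemma kernel_mass_lower_bound:
  assumes \<sigma>: "1 \<le> \<sigma>" and \<tau>: "2 * \<sigma> \<le> \<tau>" "\<tau> \<le> 4 * \<sigma>"
    and h: "1 - 1 / (16 * \<sigma>) \<le> h" "h \<le> 1"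
  shows "1 / (480 * \<sigma>^2) \<le> kernel_mass \<tau> h"
proof -
  have small: "1 / (16 * \<sigma>) \<le> 2" using \<sigma> by (simp add: field_simps)
  have "(\<integral>h'. indicator {-1 .. -1 + 1/(16*\<sigma>)} h' * (1 / (30 * \<sigma>)) \<partial>lborel) \<le> kernel_mass \<tau> h"
    unfolding kernel_mass_eq
  proof (intro Bochner_Integration.integral_mono integrable_Pk integrable_indicator_Icc_mult)
    fix h' :: real
    show "indicator {-1 .. -1 + 1/(16*\<sigma>)} h' * (1 / (30 * \<sigma>)) \<le> indicator {-1..1} h' * Pk \<tau> h h'"
      using Pk_lower_bound[OF \<sigma> \<tau> h, of h'] small Pk_nonneg[of \<tau> h h'] \<sigma> \<tau>
      by (auto simp: indicator_def)
  qed (use \<sigma> \<tau> in auto)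
  then show ?thesis
    using \<sigma> by (subst (asm) integral_indicator_Icc_mult) (auto simp: power2_eq_square)
qed

lemma integrable_kernel_mass:
  assumes s: "0 \<le> s" and h: "\<bar>h\<bar> \<le> 1"
  shows "integrable lborel (\<lambda>\<tau>. indicator {2 * s..} \<tau> * kernel_mass \<tau> h)"
proof (rule Bochner_Integration.integrable_bound)
  show "integrable lborel (\<lambda>\<tau>. indicator {2 * s..} \<tau> * (128 / (\<tau> + 4)^2))"
    using has_bochner_integral_inverse_square_atLeast[of "2 * s" 4 128] s
    by (auto intro: integrable.intros)
  show "AE \<tau> in lborel. norm (indicator {2 * s..} \<tau> * kernel_mass \<tau> h)
      \<le> norm (indicator {2 * s..} \<tau> * (128 / (\<tau> + 4)^2))"
    using s kernel_mass_le_majorant[OF _ h] kernel_mass_nonneg by (auto simp: indicator_def)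
qed measurable

lemma Efun_nonneg: "0 \<le> s \<Longrightarrow> 0 \<le> Efun s h"
  unfolding Efun_eq
  by (intro Bochner_Integration.integral_nonneg) (auto simp: kernel_mass_nonneg indicator_def)

lemma Efun_le:
  assumes s: "0 \<le> s" and h: "\<bar>h\<bar> \<le> 1"
  shows "Efun s h \<le> 64 / (s + 2)"
proof -
  have int: "has_bochner_integral lborel (\<lambda>\<tau>. indicator {2 * s..} \<tau> * (128 / (\<tau> + 4)^2))
      (128 / (2 * s + 4))"
    using has_bochner_integral_inverse_square_atLeast[of "2 * s" 4 128] s by simp
  have "Efun s h \<le> (\<integral>\<tau>. indicator {2 * s..} \<tau> * (128 / (\<tau> + 4)^2) \<partial>lborel)"
    unfolding Efun_eq
    using s kernel_mass_le_majorant[OF _ h]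
    by (intro Bochner_Integration.integral_mono integrable_kernel_mass s h
        integrable.intros[OF int]) (auto simp: indicator_def)
  also have "\<dots> = 64 / (s + 2)"
    using int s by (simp add: has_bochner_integral_iff field_simps)
  finally show ?thesis .
qed

lemma Efun_le_32: "0 \<le> s \<Longrightarrow> \<bar>h\<bar> \<le> 1 \<Longrightarrow> Efun s h \<le> 32"
  using Efun_le[of s h] divide_left_mono[of 2 "s + 2" 64] by simp

lemma Efun_lower_bound:
  assumes \<sigma>: "1 \<le> \<sigma>" and h: "1 - 1 / (16 * \<sigma>) \<le> h" "h \<le> 1"
  shows "1 / (240 * \<sigma>) \<le> Efun \<sigma> h"
proof -
  have "1 / (16 * \<sigma>) \<le> 2" using \<sigma> by (simp add: field_simps)
  then have "\<bar>h\<bar> \<le> 1" using h by linarith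
  then have "(\<integral>\<tau>. indicator {2 * \<sigma> .. 4 * \<sigma>} \<tau> * (1 / (480 * \<sigma>^2)) \<partial>lborel) \<le> Efun \<sigma> h"
    unfolding Efun_eq
  proof (intro Bochner_Integration.integral_mono integrable_kernel_mass integrable_indicator_Icc_mult)
    fix \<tau> :: real
    show "indicator {2 * \<sigma> .. 4 * \<sigma>} \<tau> * (1 / (480 * \<sigma>^2)) \<le> indicator {2 * \<sigma>..} \<tau> * kernel_mass \<tau> h"
      using kernel_mass_lower_bound[OF \<sigma> _ _ h, of \<tau>] kernel_mass_nonneg[of \<tau> h] \<sigma>
      by (auto simp: indicator_def)
  qed (use \<sigma> in auto)
  then show ?thesis
    using \<sigma> by (subst (asm) integral_indicator_Icc_mult) (auto simp: power2_eq_square field_simps)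
qed

text \<open>\<open>theta\<close> involves \<open>arcsin\<close>, which carries junk values off \<open>[-1,1]\<close>; composing with
  \<open>clamp\<close> makes the rotation angle continuous on all of \<open>\<real>\<close> without changing it on \<open>[-1,1]\<close>.\<close>
definition clamp :: "real \<Rightarrow> real" where
  "clamp h = max (-1) (min 1 h)"

lemma clamp_id: "\<bar>h\<bar> \<le> 1 \<Longrightarrow> clamp h = h"
  by (auto simp: clamp_def)

lemma abs_clamp_le_1: "\<bar>clamp h\<bar> \<le> 1"
  by (auto simp: clamp_def)

lemma clamp_measurable[measurable]: "clamp \<in> borel_measurable borel"
  unfolding clamp_def by measurable

lemma theta_clamp_measurable[measurable]: "(\<lambda>h. theta (clamp h)) \<in> borel_measurable borel"
proof (rule borel_measurable_continuous_onI)
  show "continuous_on UNIV (\<lambda>h. theta (clamp h))"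
    unfolding theta_def clamp_def by (intro continuous_intros) auto
qed

lemma angn_measurable[measurable]: "angn \<in> borel_measurable borel"
  unfolding angn_def by measurable

definition measurable_field :: "(real \<Rightarrow> real \<Rightarrow> real \<Rightarrow> real) \<Rightarrow> bool" where
  "measurable_field w \<longleftrightarrow> (\<lambda>(t, \<phi>, h). w t \<phi> h) \<in> borel_measurable borel"

lemma measurable_field_compose:
  assumes "measurable_field w"
    and "a \<in> borel_measurable M" "b \<in> borel_measurable M" "c \<in> borel_measurable M"
  shows "(\<lambda>x. w (a x) (b x) (c x)) \<in> borel_measurable M"
proof -
  have w: "(\<lambda>(t, \<phi>, h). w t \<phi> h) \<in> borel_measurable (borel \<Otimes>\<^sub>M borel \<Otimes>\<^sub>M borel)"
    using assms(1) unfolding measurable_field_def borel_prod .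
  have "(\<lambda>x. (a x, b x, c x)) \<in> M \<rightarrow>\<^sub>M borel \<Otimes>\<^sub>M borel \<Otimes>\<^sub>M borel"
    using assms(2-4) by measurable
  from measurable_compose[OF this w] show ?thesis by simp
qed

lemma measurable_uncurry4_compose:
  fixes g :: "real \<Rightarrow> real \<Rightarrow> real \<Rightarrow> real \<Rightarrow> real"
  assumes "(\<lambda>(r, \<phi>, S, h). g r \<phi> S h) \<in> borel_measurable borel"
    and "a \<in> borel_measurable M" "b \<in> borel_measurable M" "c \<in> borel_measurable M"
      "d \<in> borel_measurable M"
  shows "(\<lambda>x. g (a x) (b x) (c x) (d x)) \<in> borel_measurable M"
proof -
  have g: "(\<lambda>(r, \<phi>, S, h). g r \<phi> S h) \<in> borel_measurable (borel \<Otimes>\<^sub>M borel \<Otimes>\<^sub>M borel \<Otimes>\<^sub>M borel)"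
    using assms(1) by (simp add: borel_prod)
  have "(\<lambda>x. (a x, b x, c x, d x)) \<in> M \<rightarrow>\<^sub>M borel \<Otimes>\<^sub>M borel \<Otimes>\<^sub>M borel \<Otimes>\<^sub>M borel"
    using assms(2-5) by measurable
  from measurable_compose[OF this g] show ?thesis by simp
qed

text \<open>For data independent of \<open>x\<close> the solution is independent of \<open>x\<close> too, and its trace at
  \<open>s = 0\<close> is a field \<open>w t \<phi> h\<close>; \<open>gain_op w r \<phi> (2 s) h\<close> is then the gain term at time \<open>r\<close>
  and \<open>duhamel\<close> its integral along the characteristic \<open>s \<mapsto> s + \<tau>\<close>.\<close>
definition gain_op :: "(real \<Rightarrow> real \<Rightarrow> real \<Rightarrow> real) \<Rightarrow> real \<Rightarrow> real \<Rightarrow> real \<Rightarrow> real \<Rightarrow> real" where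
  "gain_op w r \<phi> S h = (LINT h':{-1..1}|lborel. 2 * Pk S h h' * w r (angn (\<phi> + theta (clamp h'))) h')"

definition duhamel :: "(real \<Rightarrow> real \<Rightarrow> real \<Rightarrow> real) \<Rightarrow> real \<Rightarrow> real \<Rightarrow> real \<Rightarrow> real \<Rightarrow> real" where
  "duhamel w t \<phi> s h = (LINT \<tau>:{0..t}|lborel. gain_op w (t - \<tau>) \<phi> (2 * (s + \<tau>)) h)"

lemma gain_op_eq:
  "gain_op w r \<phi> S h
    = (\<integral>h'. indicator {-1..1} h' * (2 * Pk S h h' * w r (angn (\<phi> + theta (clamp h'))) h') \<partial>lborel)"
  by (simp add: gain_op_def set_lebesgue_integral_def)

lemma duhamel_eq:
  "duhamel w t \<phi> s h = (\<integral>\<tau>. indicator {0..t} \<tau> * gain_op w (t - \<tau>) \<phi> (2 * (s + \<tau>)) h \<partial>lborel)"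
  by (simp add: duhamel_def set_lebesgue_integral_def)

lemma gain_op_measurable:
  assumes "measurable_field w"
  shows "(\<lambda>(r, \<phi>, S, h). gain_op w r \<phi> S h) \<in> borel_measurable borel"
proof -
  note [measurable (raw)] = measurable_field_compose[OF assms]
  show ?thesis
    unfolding gain_op_eq indicator_def atLeastAtMost_iff borel_prod[symmetric] by measurable
qed

lemma duhamel_measurable:
  assumes "measurable_field w"
  shows "(\<lambda>(t, \<phi>, s, h). duhamel w t \<phi> s h) \<in> borel_measurable borel"
proof -
  note [measurable (raw)] = measurable_uncurry4_compose[OF gain_op_measurable[OF assms]]
  show ?thesis
    unfolding duhamel_eq indicator_def atLeastAtMost_iff borel_prod[symmetric] by measurable
qed

lemma gain_op_integrable_bound:
  assumes w: "measurable_field w" and S: "0 \<le> S"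
    and B: "\<And>\<psi> h'. \<bar>h'\<bar> \<le> 1 \<Longrightarrow> \<bar>w r \<psi> h'\<bar> \<le> B"
  shows "integrable lborel
      (\<lambda>h'. indicator {-1..1} h' * (2 * Pk S h h' * w r (angn (\<phi> + theta (clamp h'))) h'))"
    and "\<bar>gain_op w r \<phi> S h\<bar> \<le> 4 * B"
proof -
  note [measurable (raw)] = measurable_field_compose[OF w]
  have bound: "\<bar>2 * Pk S h h' * w r (angn (\<phi> + theta (clamp h'))) h'\<bar> \<le> 2 * B"
    if "\<bar>h'\<bar> \<le> 1" for h'
    using Pk_nonneg[OF S, of h h'] Pk_le_1[OF S, of h h'] B[OF that]
      mult_mono[of "Pk S h h'" 1 "\<bar>w r (angn (\<phi> + theta (clamp h'))) h'\<bar>" B]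
    by (simp add: abs_mult)
  have m: "(\<lambda>h'. 2 * Pk S h h' * w r (angn (\<phi> + theta (clamp h'))) h') \<in> borel_measurable lborel"
    by measurable
  have "integrable lborel
      (\<lambda>h'. indicator {-1..1} h' *\<^sub>R (2 * Pk S h h' * w r (angn (\<phi> + theta (clamp h'))) h'))"
    by (rule integrableI_bounded_set_indicator[where B="2 * B", OF _ m])
       (auto simp: emeasure_lborel_Icc_eq intro!: AE_I2 bound)
  then show int: "integrable lborel
      (\<lambda>h'. indicator {-1..1} h' * (2 * Pk S h h' * w r (angn (\<phi> + theta (clamp h'))) h'))"
    by simp
  have "\<bar>gain_op w r \<phi> S h\<bar> \<le> (\<integral>h'. indicator {-1..1::real} h' * (2 * B) \<partial>lborel)"
    unfolding gain_op_eq
    by (rule integral_abs_bound_integral[OF int integrable_indicator_Icc_mult])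
       (auto simp: indicator_def bound)
  then show "\<bar>gain_op w r \<phi> S h\<bar> \<le> 4 * B"
    by (simp add: integral_indicator_Icc_mult)
qed

lemma gain_op_nonneg:
  assumes "0 \<le> S" and "\<And>\<psi> h'. \<bar>h'\<bar> \<le> 1 \<Longrightarrow> 0 \<le> w r \<psi> h'"
  shows "0 \<le> gain_op w r \<phi> S h"
  unfolding gain_op_eq using assms Pk_nonneg
  by (intro Bochner_Integration.integral_nonneg) (auto simp: indicator_def)

lemma duhamel_nonpos_time: "t \<le> 0 \<Longrightarrow> duhamel w t \<phi> s h = 0"
  unfolding duhamel_eq
  by (rule integral_eq_zero_AE, rule eventually_mono[OF AE_lborel_singleton[of 0]])
     (auto simp: indicator_def)

lemma duhamel_nonneg:
  assumes "0 \<le> s" and "\<And>r \<psi> h'. 0 \<le> r \<Longrightarrow> r \<le> t \<Longrightarrow> \<bar>h'\<bar> \<le> 1 \<Longrightarrow> 0 \<le> w r \<psi> h'"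
  shows "0 \<le> duhamel w t \<phi> s h"
  unfolding duhamel_eq using assms
  by (intro Bochner_Integration.integral_nonneg) (auto simp: indicator_def intro!: gain_op_nonneg)

lemma has_bochner_integral_power_diff:
  assumes t: "0 \<le> t"
  shows "has_bochner_integral lborel (\<lambda>\<tau>. c * (t - \<tau>)^n * indicator {0..t} \<tau>) (c * t^Suc n / Suc n)"
proof -
  have "has_bochner_integral lborel (\<lambda>\<tau>. c * (t - \<tau>)^n * indicator {0..t} \<tau>)
      ((\<lambda>\<tau>. - c * (t - \<tau>)^Suc n / Suc n) t - (\<lambda>\<tau>. - c * (t - \<tau>)^Suc n / Suc n) 0)"
  proof (rule has_bochner_integral_FTC_Icc_real[OF t])
    fix x :: real
    show "((\<lambda>\<tau>. - c * (t - \<tau>)^Suc n / Suc n) has_real_derivative c * (t - x)^n) (at x)"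
      by (auto intro!: derivative_eq_intros simp del: of_nat_Suc power_Suc)
  qed (intro continuous_intros)
  then show ?thesis by simp
qed

lemma duhamel_integrable_bound:
  assumes t: "0 \<le> t" and s: "0 \<le> s" and w: "measurable_field w" and c: "0 \<le> c"
    and B: "\<And>r \<psi> h'. 0 \<le> r \<Longrightarrow> r \<le> t \<Longrightarrow> \<bar>h'\<bar> \<le> 1 \<Longrightarrow> \<bar>w r \<psi> h'\<bar> \<le> c * r^n"
  shows "integrable lborel (\<lambda>\<tau>. indicator {0..t} \<tau> * gain_op w (t - \<tau>) \<phi> (2 * (s + \<tau>)) h)"
    and "\<bar>duhamel w t \<phi> s h\<bar> \<le> 4 * c * t^Suc n / Suc n"
proof -
  note [measurable (raw)] = measurable_uncurry4_compose[OF gain_op_measurable[OF w]]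
  have bound: "\<bar>indicator {0..t} \<tau> * gain_op w (t - \<tau>) \<phi> (2 * (s + \<tau>)) h\<bar>
      \<le> 4 * c * (t - \<tau>)^n * indicator {0..t} \<tau>" for \<tau>
  proof (cases "\<tau> \<in> {0..t}")
    case True
    then have "\<bar>gain_op w (t - \<tau>) \<phi> (2 * (s + \<tau>)) h\<bar> \<le> 4 * (c * (t - \<tau>)^n)"
      using s by (intro gain_op_integrable_bound(2)[OF w] B) auto
    then show ?thesis using True by simp
  qed simp
  have M: "has_bochner_integral lborel (\<lambda>\<tau>. 4 * c * (t - \<tau>)^n * indicator {0..t} \<tau>)
      (4 * c * t^Suc n / Suc n)"
    using has_bochner_integral_power_diff[OF t, of "4 * c" n] by simp
  then have Mi: "integrable lborel (\<lambda>\<tau>. 4 * c * (t - \<tau>)^n * indicator {0..t} \<tau>)"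
    by (rule integrable.intros)
  show int: "integrable lborel (\<lambda>\<tau>. indicator {0..t} \<tau> * gain_op w (t - \<tau>) \<phi> (2 * (s + \<tau>)) h)"
  proof (rule Bochner_Integration.integrable_bound[OF Mi])
    show "AE \<tau> in lborel. norm (indicator {0..t} \<tau> * gain_op w (t - \<tau>) \<phi> (2 * (s + \<tau>)) h)
        \<le> norm (4 * c * (t - \<tau>)^n * indicator {0..t} \<tau>)"
      using bound by (intro AE_I2) (metis abs_ge_self order_trans real_norm_def)
  qed measurable
  have "\<bar>duhamel w t \<phi> s h\<bar> \<le> (\<integral>\<tau>. 4 * c * (t - \<tau>)^n * indicator {0..t} \<tau> \<partial>lborel)"
    unfolding duhamel_eq by (rule integral_abs_bound_integral[OF int Mi]) (use bound in auto)
  then show "\<bar>duhamel w t \<phi> s h\<bar> \<le> 4 * c * t^Suc n / Suc n"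
    using M by (simp add: has_bochner_integral_iff)
qed

lemma summable_abs_le_mult:
  fixes f :: "nat \<Rightarrow> real"
  assumes "summable b" "\<And>n. \<bar>f n\<bar> \<le> c * b n"
  shows "summable f"
  by (rule summable_comparison_test'[OF summable_mult[OF assms(1), of c], where N=0])
     (use assms(2) in simp)

lemma integral_suminf_dominated:
  fixes f :: "nat \<Rightarrow> 'a \<Rightarrow> real"
  assumes A: "A \<in> sets M" "emeasure M A < \<infinity>" and int: "\<And>n. integrable M (f n)"
    and bound: "\<And>n x. \<bar>f n x\<bar> \<le> b n * indicator A x" and b: "summable b"
  shows "(\<integral>x. (\<Sum>n. f n x) \<partial>M) = (\<Sum>n. integral\<^sup>L M (f n))"
proof (rule integral_suminf[OF int])
  show "AE x in M. summable (\<lambda>n. norm (f n x))"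
    using bound by (intro AE_I2 summable_abs_le_mult[OF b, of _ "indicator A x" for x])
       (simp add: mult.commute)
  have "(\<integral>x. norm (f n x) \<partial>M) \<le> (\<integral>x. b n * indicator A x \<partial>M)" for n
    using bound A by (intro Bochner_Integration.integral_mono integrable_norm int) auto
  then show "summable (\<lambda>n. \<integral>x. norm (f n x) \<partial>M)"
    by (intro summable_abs_le_mult[OF b, of _ "measure M A"])
       (simp add: mult.commute abs_of_nonneg Bochner_Integration.integral_nonneg
         sets.Int_space_eq2[OF A(1)])
qed

lemma gain_op_suminf:
  assumes S: "0 \<le> S" and w: "\<And>n. measurable_field (w n)"
    and B: "\<And>n \<psi> h'. \<bar>h'\<bar> \<le> 1 \<Longrightarrow> \<bar>w n r \<psi> h'\<bar> \<le> b n" and b: "summable b"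
  shows "gain_op (\<lambda>r \<psi> h'. \<Sum>n. w n r \<psi> h') r \<phi> S h = (\<Sum>n. gain_op (w n) r \<phi> S h)"
proof -
  define f where "f n h' = indicator {-1..1} h' * (2 * Pk S h h' * w n r (angn (\<phi> + theta (clamp h'))) h')"
    for n h'
  have sum: "indicator {-1..1} h' * (2 * Pk S h h' * (\<Sum>n. w n r (angn (\<phi> + theta (clamp h'))) h'))
      = (\<Sum>n. f n h')" for h'
  proof (cases "h' \<in> {-1..1}")
    case True
    then have "summable (\<lambda>n. w n r (angn (\<phi> + theta (clamp h'))) h')"
      using B by (intro summable_abs_le_mult[OF b, where c=1]) auto
    then show ?thesis using True by (simp add: f_def suminf_mult)
  qed (simp add: f_def)
  have bound: "\<bar>f n h'\<bar> \<le> (2 * b n) * indicator {-1..1} h'" for n h'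
    using Pk_nonneg[OF S, of h h'] Pk_le_1[OF S, of h h']
      B[of h' n] mult_mono[of "Pk S h h'" 1 "\<bar>w n r (angn (\<phi> + theta (clamp h'))) h'\<bar>" "b n"]
    by (auto simp: f_def abs_mult indicator_def)
  have "gain_op (\<lambda>r \<psi> h'. \<Sum>n. w n r \<psi> h') r \<phi> S h = (\<integral>h'. (\<Sum>n. f n h') \<partial>lborel)"
    unfolding gain_op_eq sum ..
  also have "\<dots> = (\<Sum>n. integral\<^sup>L lborel (f n))"
    using gain_op_integrable_bound(1)[OF w S B] bound summable_mult[OF b, of 2]
    by (intro integral_suminf_dominated[where A="{-1..1}" and b="\<lambda>n. 2 * b n"]) (auto simp: f_def emeasure_lborel_Icc_eq)
  also have "\<dots> = (\<Sum>n. gain_op (w n) r \<phi> S h)"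
    unfolding gain_op_eq f_def ..
  finally show ?thesis .
qed

lemma duhamel_suminf:
  assumes t: "0 \<le> t" and s: "0 \<le> s" and w: "\<And>n. measurable_field (w n)"
    and B: "\<And>n r \<psi> h'. 0 \<le> r \<Longrightarrow> r \<le> t \<Longrightarrow> \<bar>h'\<bar> \<le> 1 \<Longrightarrow> \<bar>w n r \<psi> h'\<bar> \<le> b n"
    and b: "summable b"
  shows "duhamel (\<lambda>r \<psi> h'. \<Sum>n. w n r \<psi> h') t \<phi> s h = (\<Sum>n. duhamel (w n) t \<phi> s h)"
proof -
  define g where "g n \<tau> = indicator {0..t} \<tau> * gain_op (w n) (t - \<tau>) \<phi> (2 * (s + \<tau>)) h" for n \<tau>
  have b0: "0 \<le> b n" for n
    using B[of 0 0 n 0] t by linarith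
  have sum: "indicator {0..t} \<tau> * gain_op (\<lambda>r \<psi> h'. \<Sum>n. w n r \<psi> h') (t - \<tau>) \<phi> (2 * (s + \<tau>)) h
      = (\<Sum>n. g n \<tau>)" for \<tau>
    using gain_op_suminf[OF _ w B b] s by (cases "\<tau> \<in> {0..t}") (auto simp: g_def)
  have bound: "\<bar>g n \<tau>\<bar> \<le> (4 * b n) * indicator {0..t} \<tau>" for n \<tau>
    using gain_op_integrable_bound(2)[OF w[of n], of "2 * (s + \<tau>)" "t - \<tau>" "b n"] B s
    by (cases "\<tau> \<in> {0..t}") (auto simp: g_def)
  have int: "integrable lborel (g n)" for n
    unfolding g_def using B b0
    by (intro duhamel_integrable_bound(1)[OF t s w[of n], where n=0 and c="b n"]) auto
  have "duhamel (\<lambda>r \<psi> h'. \<Sum>n. w n r \<psi> h') t \<phi> s h = (\<integral>\<tau>. (\<Sum>n. g n \<tau>) \<partial>lborel)"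
    unfolding duhamel_eq sum ..
  also have "\<dots> = (\<Sum>n. integral\<^sup>L lborel (g n))"
    using int bound summable_mult[OF b, of 4]
    by (intro integral_suminf_dominated[where A="{0..t}" and b="\<lambda>n. 4 * b n"]) (auto simp: emeasure_lborel_Icc_eq)
  also have "\<dots> = (\<Sum>n. duhamel (w n) t \<phi> s h)"
    unfolding duhamel_eq g_def ..
  finally show ?thesis .
qed

definition unit_profile :: "(real \<Rightarrow> real) \<Rightarrow> bool" where
  "unit_profile f0 \<longleftrightarrow> f0 \<in> borel_measurable borel \<and> (\<forall>\<phi>. 0 \<le> f0 \<phi> \<and> f0 \<phi> \<le> 1)"

text \<open>The trace at \<open>s = 0\<close> of the solution with data \<open>f0 \<phi>\<close> solves
  \<open>w = f0 \<phi> E(t, h) + duhamel w t \<phi> 0 h\<close>. The \<open>max\<close> and \<open>clamp\<close> keep the first term inside the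
  range \<open>t \<ge> 0, \<bar>h\<bar> \<le> 1\<close> where the bounds on \<open>Efun\<close> hold, and are inert there.\<close>
primrec neumann_term :: "(real \<Rightarrow> real) \<Rightarrow> nat \<Rightarrow> real \<Rightarrow> real \<Rightarrow> real \<Rightarrow> real" where
  "neumann_term f0 0 = (\<lambda>t \<phi> h. f0 \<phi> * Efun (max t 0) (clamp h))"
| "neumann_term f0 (Suc n) = (\<lambda>t \<phi> h. duhamel (neumann_term f0 n) t \<phi> 0 h)"

definition neumann_bound :: "real \<Rightarrow> nat \<Rightarrow> real" where
  "neumann_bound T n = 32 * 4^n * T^n / fact n"

definition neumann_sum :: "(real \<Rightarrow> real) \<Rightarrow> real \<Rightarrow> real \<Rightarrow> real \<Rightarrow> real" where
  "neumann_sum f0 t \<phi> h = (\<Sum>n. neumann_term f0 n t \<phi> h)"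

lemma summable_neumann_bound: "summable (neumann_bound T)"
proof -
  have "neumann_bound T = (\<lambda>n. 32 * (inverse (fact n) * (4 * T)^n))"
    by (auto simp: neumann_bound_def fun_eq_iff field_simps power_mult_distrib)
  then show ?thesis by (simp only:) (intro summable_mult summable_exp)
qed

lemma neumann_bound_mono: "0 \<le> r \<Longrightarrow> r \<le> T \<Longrightarrow> neumann_bound r n \<le> neumann_bound T n"
  unfolding neumann_bound_def by (intro divide_right_mono mult_left_mono power_mono) auto

lemma neumann_term_measurable:
  assumes "unit_profile f0"
  shows "measurable_field (neumann_term f0 n)"
proof (induction n)
  case 0
  have [measurable]: "f0 \<in> borel_measurable borel" using assms by (simp add: unit_profile_def)
  show ?case unfolding measurable_field_def neumann_term.simps borel_prod[symmetric] by measurable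
next
  case (Suc n)
  note [measurable (raw)] = measurable_uncurry4_compose[OF duhamel_measurable[OF Suc.IH]]
  show ?case unfolding measurable_field_def neumann_term.simps borel_prod[symmetric] by measurable
qed

lemma neumann_term_nonneg:
  assumes "unit_profile f0"
  shows "0 \<le> neumann_term f0 n t \<phi> h"
proof (induction n arbitrary: t \<phi> h)
  case 0
  then show ?case
    using assms Efun_nonneg[of "max t 0" "clamp h"] by (simp add: unit_profile_def)
next
  case (Suc n)
  then show ?case by (simp add: duhamel_nonneg)
qed

lemma neumann_term_bound:
  assumes f0: "unit_profile f0"
  shows "\<bar>neumann_term f0 n t \<phi> h\<bar> \<le> neumann_bound (max t 0) n"
proof (induction n arbitrary: t \<phi> h)
  case 0
  have "f0 \<phi> * Efun (max t 0) (clamp h) \<le> 1 * 32"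
    using f0 Efun_nonneg[of "max t 0" "clamp h"] Efun_le_32[of "max t 0" "clamp h"] abs_clamp_le_1
    by (intro mult_mono) (auto simp: unit_profile_def)
  then show ?case
    using neumann_term_nonneg[OF f0, of 0 t \<phi> h] by (simp add: neumann_bound_def)
next
  case (Suc n)
  have IH: "\<bar>neumann_term f0 n r \<psi> h'\<bar> \<le> 32 * 4^n / fact n * r^n" if "0 \<le> r" for r \<psi> h'
    using Suc.IH[of r \<psi> h'] that by (simp add: neumann_bound_def)
  show ?case
  proof (cases "t \<le> 0")
    case False
    then have "\<bar>duhamel (neumann_term f0 n) t \<phi> 0 h\<bar> \<le> 4 * (32 * 4^n / fact n) * t^Suc n / Suc n"
      using IH by (intro duhamel_integrable_bound(2)[OF _ _ neumann_term_measurable[OF f0]]) auto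
    also have "\<dots> = neumann_bound (max t 0) (Suc n)"
      using False by (simp add: neumann_bound_def field_simps)
    finally show ?thesis by simp
  qed (simp add: duhamel_nonpos_time neumann_bound_def)
qed

lemma summable_neumann_term: "unit_profile f0 \<Longrightarrow> summable (\<lambda>n. neumann_term f0 n t \<phi> h)"
  using neumann_term_bound
  by (intro summable_abs_le_mult[OF summable_neumann_bound, where c=1]) simp

lemma neumann_sum_measurable:
  assumes "unit_profile f0"
  shows "measurable_field (neumann_sum f0)"
proof -
  have "(\<lambda>x. \<Sum>n. case x of (t, \<phi>, h) \<Rightarrow> neumann_term f0 n t \<phi> h) \<in> borel_measurable borel"
    using neumann_term_measurable[OF assms] unfolding measurable_field_def by measurable
  then show ?thesis unfolding measurable_field_def neumann_sum_def by (simp add: case_prod_beta')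
qed

lemma neumann_sum_nonneg: "unit_profile f0 \<Longrightarrow> 0 \<le> neumann_sum f0 t \<phi> h"
  unfolding neumann_sum_def
  by (intro suminf_nonneg summable_neumann_term neumann_term_nonneg)

lemma neumann_sum_bound:
  assumes f0: "unit_profile f0" and t: "0 \<le> t" "t \<le> T"
  shows "\<bar>neumann_sum f0 t \<phi> h\<bar> \<le> (\<Sum>n. neumann_bound T n)"
proof -
  have "neumann_sum f0 t \<phi> h \<le> (\<Sum>n. neumann_bound T n)"
    unfolding neumann_sum_def
  proof (rule suminf_le[OF _ summable_neumann_term[OF f0] summable_neumann_bound])
    fix n
    show "neumann_term f0 n t \<phi> h \<le> neumann_bound T n"
      using neumann_term_bound[OF f0, of n t \<phi> h] neumann_bound_mono[of t T n] t by auto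
  qed
  then show ?thesis using neumann_sum_nonneg[OF f0] by simp
qed

lemma neumann_sum_fixed_point:
  assumes f0: "unit_profile f0" and t: "0 \<le> t" and h: "\<bar>h\<bar> \<le> 1"
  shows "neumann_sum f0 t \<phi> h = f0 \<phi> * Efun t h + duhamel (neumann_sum f0) t \<phi> 0 h"
proof -
  have "neumann_sum f0 t \<phi> h
      = neumann_term f0 0 t \<phi> h + (\<Sum>n. duhamel (neumann_term f0 n) t \<phi> 0 h)"
    unfolding neumann_sum_def using suminf_split_head[OF summable_neumann_term[OF f0]] by simp
  also have "\<dots> = neumann_term f0 0 t \<phi> h + duhamel (\<lambda>r \<psi> h'. \<Sum>n. neumann_term f0 n r \<psi> h') t \<phi> 0 h"
  proof (rule arg_cong[OF duhamel_suminf[symmetric, OF t _ neumann_term_measurable[OF f0] _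
          summable_neumann_bound]])
    fix n and r \<psi> h' :: real
    assume "0 \<le> r" "r \<le> t"
    then show "\<bar>neumann_term f0 n r \<psi> h'\<bar> \<le> neumann_bound t n"
      using neumann_term_bound[OF f0, of n r \<psi> h'] neumann_bound_mono[of r t n] by auto
  qed simp
  also have "(\<lambda>r \<psi> h'. \<Sum>n. neumann_term f0 n r \<psi> h') = neumann_sum f0"
    by (simp add: neumann_sum_def fun_eq_iff)
  finally show ?thesis using t h by (simp add: clamp_id)
qed

definition neumann_solution :: "(real \<Rightarrow> real) \<Rightarrow> state" where
  "neumann_solution f0 t x \<phi> s h = f0 \<phi> * Efun (s + t) h + duhamel (neumann_sum f0) t \<phi> s h"

lemma neumann_solution_trace:
  "unit_profile f0 \<Longrightarrow> 0 \<le> t \<Longrightarrow> \<bar>h\<bar> \<le> 1 \<Longrightarrow> neumann_solution f0 t x \<phi> 0 h = neumann_sum f0 t \<phi> h"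
  by (simp add: neumann_solution_def neumann_sum_fixed_point)

lemma neumann_solution_initial: "neumann_solution f0 0 x \<phi> s h = f0 \<phi> * Efun s h"
  by (simp add: neumann_solution_def duhamel_nonpos_time)

lemma neumann_solution_measurable:
  assumes f0: "unit_profile f0"
  shows "(\<lambda>(t, x, \<phi>, s, h). neumann_solution f0 t x \<phi> s h) \<in> borel_measurable borel"
proof -
  have [measurable]: "f0 \<in> borel_measurable borel" using f0 by (simp add: unit_profile_def)
  note [measurable (raw)] = measurable_uncurry4_compose[OF duhamel_measurable[OF neumann_sum_measurable[OF f0]]]
  show ?thesis unfolding neumann_solution_def borel_prod[symmetric] by measurable
qed

lemma gain_integrand_neumann_solution:
  assumes f0: "unit_profile f0" and t: "0 \<le> t"
  shows "indicator {-1..1} h' * gain_integrand (neumann_solution f0) t x \<phi> s h h'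
       = indicator {-1..1} h' * (2 * Pk (2 * s) h h' * neumann_sum f0 t (angn (\<phi> + theta (clamp h'))) h')"
proof (cases "h' \<in> {-1..1}")
  case True
  then have "\<bar>h'\<bar> \<le> 1" by auto
  then show ?thesis by (simp add: gain_integrand_def neumann_solution_trace[OF f0 t] clamp_id)
qed simp

lemma gain_neumann_solution:
  assumes "unit_profile f0" and "0 \<le> t"
  shows "gain (neumann_solution f0) t y \<phi> s h = gain_op (neumann_sum f0) t \<phi> (2 * s) h"
  unfolding gain_def set_lebesgue_integral_def gain_op_eq
  by (intro Bochner_Integration.integral_cong) (use gain_integrand_neumann_solution[OF assms] in auto)

lemma set_integrable_gain_integrand_neumann_solution:
  assumes f0: "unit_profile f0" and t: "0 \<le> t" and s: "0 \<le> s"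
  shows "set_integrable lborel {-1..1} (gain_integrand (neumann_solution f0) t x \<phi> s h)"
proof -
  have "(\<lambda>h'. indicator {-1..1} h' *\<^sub>R gain_integrand (neumann_solution f0) t x \<phi> s h h')
      = (\<lambda>h'. indicator {-1..1} h' * (2 * Pk (2 * s) h h' * neumann_sum f0 t (angn (\<phi> + theta (clamp h'))) h'))"
    by (simp add: fun_eq_iff gain_integrand_neumann_solution[OF f0 t])
  then show ?thesis
    unfolding set_integrable_def
    using gain_op_integrable_bound(1)[OF neumann_sum_measurable[OF f0], of "2 * s" t
        "\<Sum>n. neumann_bound t n" h \<phi>] neumann_sum_bound[OF f0 t order_refl] s
    by simp
qed

lemma cell_measurable[measurable]: "cell \<in> sets borel"
  unfolding cell_def by (intro borel_Times) auto

lemma neumann_solution_trace_integral_bound: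
  assumes f0: "unit_profile f0" and T: "0 \<le> T"
  shows "\<exists>C. \<forall>t\<in>{0..T}. (\<integral>\<^sup>+ u. indicator (cell \<times> {0..<2 * pi} \<times> {-1..1}) u
            * ennreal \<bar>case u of (x, \<phi>, h) \<Rightarrow> neumann_solution f0 t x \<phi> 0 h\<bar> \<partial>lborel) \<le> ennreal C"
proof (intro exI ballI)
  define A where "A = cell \<times> {0..<2 * pi} \<times> {-1..1::real}"
  define K where "K = (\<Sum>n. neumann_bound T n)"
  have A: "A \<in> sets lborel" unfolding A_def sets_lborel by (intro borel_Times cell_measurable) auto
  have "emeasure lborel A < \<infinity>"
    unfolding A_def cell_def
    by (intro emeasure_bounded_finite bounded_Times bounded_Ico bounded_closed_interval)
  then have A_finite: "emeasure lborel A = ennreal (measure lborel A)"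
    by (simp add: emeasure_eq_ennreal_measure)
  fix t assume t: "t \<in> {0..T}"
  have "(\<integral>\<^sup>+ u. indicator A u * ennreal \<bar>case u of (x, \<phi>, h) \<Rightarrow> neumann_solution f0 t x \<phi> 0 h\<bar> \<partial>lborel)
      \<le> (\<integral>\<^sup>+ u. ennreal K * indicator A u \<partial>lborel)"
  proof (rule nn_integral_mono)
    fix u :: "(real \<times> real) \<times> real \<times> real"
    obtain x \<phi> h where u: "u = (x, \<phi>, h)" by (cases u) auto
    show "indicator A u * ennreal \<bar>case u of (x, \<phi>, h) \<Rightarrow> neumann_solution f0 t x \<phi> 0 h\<bar>
        \<le> ennreal K * indicator A u"
    proof (cases "u \<in> A")
      case True
      then have "\<bar>h\<bar> \<le> 1" by (auto simp: A_def u)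
      then have "\<bar>neumann_solution f0 t x \<phi> 0 h\<bar> \<le> K"
        using neumann_sum_bound[OF f0, of t T \<phi> h] t by (simp add: K_def neumann_solution_trace[OF f0])
      then show ?thesis using True u by (simp add: ennreal_leI)
    qed simp
  qed
  also have "\<dots> = ennreal (K * measure lborel A)"
    using A A_finite neumann_sum_bound[OF f0 T order_refl, of 0 0]
    by (simp add: nn_integral_cmult_indicator ennreal_mult K_def)
  finally show "(\<integral>\<^sup>+ u. indicator (cell \<times> {0..<2 * pi} \<times> {-1..1}) u
      * ennreal \<bar>case u of (x, \<phi>, h) \<Rightarrow> neumann_solution f0 t x \<phi> 0 h\<bar> \<partial>lborel)
      \<le> ennreal (K * measure lborel A)"
    unfolding A_def .
qed

lemma neumann_solution_is_solution:
  assumes f0: "unit_profile f0"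
  shows "is_solution (\<lambda>x \<phi>. f0 \<phi>) (neumann_solution f0)"
  unfolding is_solution_def
proof (intro conjI allI impI ballI)
  fix t s :: real and x :: "real \<times> real" and \<phi> h
  assume t: "0 \<le> t" and s: "0 \<le> s"
  show "set_integrable lborel {-1..1} (gain_integrand (neumann_solution f0) t x \<phi> s h)"
    by (rule set_integrable_gain_integrand_neumann_solution[OF f0 t s])
  have duhamel_gain:
    "(\<lambda>\<tau>. indicator {0..t} \<tau> *\<^sub>R gain (neumann_solution f0) (t - \<tau>) (tshift x \<tau> \<phi>) \<phi> (s + \<tau>) h)
     = (\<lambda>\<tau>. indicator {0..t} \<tau> * gain_op (neumann_sum f0) (t - \<tau>) \<phi> (2 * (s + \<tau>)) h)"
    using gain_neumann_solution[OF f0] by (auto simp: fun_eq_iff indicator_def)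
  have "0 \<le> (\<Sum>n. neumann_bound t n)"
    using neumann_sum_bound[OF f0 t order_refl, of 0 0] by linarith
  then show "set_integrable lborel {0..t}
      (\<lambda>\<tau>. gain (neumann_solution f0) (t - \<tau>) (tshift x \<tau> \<phi>) \<phi> (s + \<tau>) h)"
    unfolding set_integrable_def duhamel_gain
    using neumann_sum_bound[OF f0]
    by (intro duhamel_integrable_bound(1)[OF t s neumann_sum_measurable[OF f0], where n=0]) auto
  show "neumann_solution f0 t x \<phi> s h = f0 \<phi> * Efun (s + t) h
      + (LINT \<tau>:{0..t}|lborel. gain (neumann_solution f0) (t - \<tau>) (tshift x \<tau> \<phi>) \<phi> (s + \<tau>) h)"
    unfolding neumann_solution_def set_lebesgue_integral_def duhamel_gain duhamel_eq ..
qed (use neumann_solution_measurable[OF f0] neumann_solution_trace_integral_bound[OF f0] in auto)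

lemma nn_integral_lborel_product:
  fixes f :: "'a::euclidean_space \<Rightarrow> ennreal" and g :: "'b::euclidean_space \<Rightarrow> ennreal"
  assumes [measurable]: "f \<in> borel_measurable borel" "g \<in> borel_measurable borel"
  shows "(\<integral>\<^sup>+u. f (fst u) * g (snd u) \<partial>lborel) = (\<integral>\<^sup>+x. f x \<partial>lborel) * (\<integral>\<^sup>+y. g y \<partial>lborel)"
proof -
  have "(\<integral>\<^sup>+u. f (fst u) * g (snd u) \<partial>lborel) = (\<integral>\<^sup>+u. f (fst u) * g (snd u) \<partial>(lborel \<Otimes>\<^sub>M lborel))"
    by (simp add: lborel_prod)
  also have "\<dots> = (\<integral>\<^sup>+x. \<integral>\<^sup>+y. f x * g y \<partial>lborel \<partial>lborel)"
    by (subst lborel.nn_integral_fst[symmetric]) auto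
  also have "\<dots> = (\<integral>\<^sup>+x. f x \<partial>lborel) * (\<integral>\<^sup>+y. g y \<partial>lborel)"
    by (simp add: nn_integral_cmult nn_integral_multc)
  finally show ?thesis .
qed

lemma emeasure_lborel_Times:
  fixes A :: "'a::euclidean_space set" and B :: "'b::euclidean_space set"
  assumes "A \<in> sets borel" "B \<in> sets borel"
  shows "emeasure lborel (A \<times> B) = emeasure lborel A * emeasure lborel B"
  using assms by (subst lborel_prod[symmetric]) (simp add: lborel.emeasure_pair_measure_Times)

lemma emeasure_cell: "emeasure lborel cell = 1"
  unfolding cell_def by (subst emeasure_lborel_Times) auto

lemma L2sq_lower_bound:
  assumes R: "R \<in> sets borel" "R \<subseteq> Dom" and c: "0 \<le> c"
    and G: "\<And>x \<phi> s h. (x, \<phi>, s, h) \<in> R \<Longrightarrow> c \<le> G x \<phi> s h"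
  shows "ennreal (c^2) * emeasure lborel R \<le> L2sq G"
proof -
  have "ennreal (c^2) * emeasure lborel R = (\<integral>\<^sup>+ u. ennreal (c^2) * indicator R u \<partial>lborel)"
    using R by (simp add: nn_integral_cmult_indicator)
  also have "\<dots> \<le> L2sq G"
    unfolding L2sq_def
  proof (rule nn_integral_mono)
    fix u :: "(real \<times> real) \<times> real \<times> real \<times> real"
    obtain x \<phi> s h where u: "u = (x, \<phi>, s, h)" by (cases u) auto
    show "ennreal (c^2) * indicator R u \<le> indicator Dom u * ennreal ((case u of (x, \<phi>, s, h) \<Rightarrow> G x \<phi> s h)^2)"
    proof (cases "u \<in> R")
      case True
      then have "c^2 \<le> (G x \<phi> s h)^2" using G c u by (intro power_mono) auto
      then show ?thesis using True R u by (auto intro: ennreal_leI)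
    qed simp
  qed
  finally show ?thesis .
qed

definition sector :: "real \<Rightarrow> real \<Rightarrow> real" where
  "sector \<delta> \<phi> = indicator {0..<\<delta>} \<phi>"

lemma sector_measurable[measurable]: "sector \<delta> \<in> borel_measurable borel"
  unfolding sector_def by measurable

lemma unit_profile_sector: "unit_profile (sector \<delta>)"
  by (auto simp: unit_profile_def sector_def indicator_def)

lemma L2_data_sector: "L2_data (\<lambda>x \<phi>. sector \<delta> \<phi>)"
  unfolding L2_data_def
proof
  show "(\<lambda>(x::real \<times> real, \<phi>). sector \<delta> \<phi>) \<in> borel_measurable borel"
    unfolding borel_prod[symmetric] by measurable
  have "Dom0 \<in> sets borel"
    unfolding Dom0_def by (intro borel_Times cell_measurable) auto
  moreover have "emeasure lborel Dom0 < \<infinity>"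
    unfolding Dom0_def cell_def by (intro emeasure_bounded_finite bounded_Times bounded_Ico)
  ultimately have Dom0: "Dom0 \<in> sets borel" "emeasure lborel Dom0 < \<infinity>" .
  have "(\<integral>\<^sup>+ u. indicator Dom0 u * ennreal ((case u of (x::real \<times> real, \<phi>) \<Rightarrow> sector \<delta> \<phi>)^2) \<partial>lborel)
      \<le> (\<integral>\<^sup>+ u. indicator Dom0 u \<partial>lborel)"
    by (intro nn_integral_mono) (auto simp: sector_def indicator_def)
  also have "\<dots> < \<infinity>"
    using Dom0 by simp
  finally show "(\<integral>\<^sup>+ u. indicator Dom0 u * ennreal ((case u of (x::real \<times> real, \<phi>) \<Rightarrow> sector \<delta> \<phi>)^2) \<partial>lborel)
      < \<infinity>" .
qed

lemma mean_sector:
  assumes "0 < \<delta>" "\<delta> \<le> 2 * pi"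
  shows "mean (\<lambda>x \<phi>. sector \<delta> \<phi>) = \<delta> / (2 * pi)"
proof -
  have "emeasure lborel (cell \<times> {0..<\<delta>}) = ennreal \<delta>"
    using assms by (subst emeasure_lborel_Times) (auto simp: emeasure_cell)
  moreover have "(LINT u:Dom0|lborel. (case u of (x, \<phi>) \<Rightarrow> sector \<delta> \<phi>))
      = (\<integral>u. indicator (cell \<times> {0..<\<delta>}) u \<partial>lborel)"
    unfolding set_lebesgue_integral_def using assms
    by (intro Bochner_Integration.integral_cong) (auto simp: Dom0_def sector_def indicator_def)
  ultimately show ?thesis
    using assms by (simp add: mean_def measure_def)
qed

lemma L2sq_sector_initial:
  assumes \<delta>: "0 < \<delta>"
  shows "L2sq (neumann_solution (sector \<delta>) 0) \<le> ennreal (4096 * \<delta>)"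
proof -
  define k :: "real \<times> real \<Rightarrow> ennreal" where
    "k sh = ennreal (4096 / (fst sh + 2)^2) * indicator {0..} (fst sh) * indicator {-1..1} (snd sh)" for sh
  define g :: "real \<times> real \<times> real \<Rightarrow> ennreal" where
    "g v = indicator {0..<\<delta>} (fst v) * k (snd v)" for v
  have [measurable]: "k \<in> borel_measurable borel" "g \<in> borel_measurable borel"
    unfolding k_def g_def by (simp_all add: borel_prod[symmetric])
  have "L2sq (neumann_solution (sector \<delta>) 0) \<le> (\<integral>\<^sup>+ u. indicator cell (fst u) * g (snd u) \<partial>lborel)"
    unfolding L2sq_def
  proof (rule nn_integral_mono)
    fix u :: "(real \<times> real) \<times> real \<times> real \<times> real"
    obtain x \<phi> s h where u: "u = (x, \<phi>, s, h)" by (cases u) auto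
    show "indicator Dom u * ennreal ((case u of (x, \<phi>, s, h) \<Rightarrow> neumann_solution (sector \<delta>) 0 x \<phi> s h)^2)
        \<le> indicator cell (fst u) * g (snd u)"
    proof (cases "u \<in> Dom")
      case True
      then have s: "0 \<le> s" and h: "\<bar>h\<bar> \<le> 1" and x: "x \<in> cell" by (auto simp: Dom_def u)
      have "(Efun s h)^2 \<le> (64 / (s + 2))^2"
        using Efun_le[OF s h] Efun_nonneg[OF s] by (intro power_mono) auto
      then have "(neumann_solution (sector \<delta>) 0 x \<phi> s h)^2 \<le> indicator {0..<\<delta>} \<phi> * (4096 / (s + 2)^2)"
        by (auto simp: neumann_solution_initial sector_def indicator_def power_divide)
      then show ?thesis
        using x s h by (auto simp: u g_def k_def indicator_def intro!: ennreal_leI)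
    qed (simp add: u)
  qed
  also have "\<dots> = emeasure lborel cell * (\<integral>\<^sup>+ v. g v \<partial>lborel)"
    by (subst nn_integral_lborel_product) auto
  also have "(\<integral>\<^sup>+ v. g v \<partial>lborel) = emeasure lborel {0..<\<delta>} * (\<integral>\<^sup>+ sh. k sh \<partial>lborel)"
    unfolding g_def by (subst nn_integral_lborel_product) auto
  also have "(\<integral>\<^sup>+ sh. k sh \<partial>lborel)
      = (\<integral>\<^sup>+ s. ennreal (4096 / (s + 2)^2) * indicator {0..} s \<partial>lborel) * emeasure lborel {-1..1::real}"
    unfolding k_def by (subst nn_integral_lborel_product) auto
  also have "emeasure lborel cell * (emeasure lborel {0..<\<delta>}
      * ((\<integral>\<^sup>+ s. ennreal (4096 / (s + 2)^2) * indicator {0..} s \<partial>lborel) * emeasure lborel {-1..1::real}))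
      = ennreal (4096 * \<delta>)"
    using \<delta> nn_integral_inverse_square_atLeast[of 0 2 4096] ennreal_mult[of \<delta> 4096]
    by (simp add: emeasure_cell ennreal_mult[symmetric] mult.commute)
  finally show ?thesis .
qed

lemma sector_solution_excess:
  assumes t: "1 \<le> t" and \<delta>: "\<delta> = 1 / (16000 * t)"
    and \<phi>: "0 \<le> \<phi>" "\<phi> < \<delta>" and s: "0 \<le> s" "s \<le> t" and h: "1 - 1 / (32 * t) \<le> h" "h \<le> 1"
  shows "1 / (960 * t) \<le> neumann_solution (sector \<delta>) t x \<phi> s h - mean (\<lambda>x \<phi>. sector \<delta> \<phi>) * Efun s h"
proof -
  have "0 < \<delta>" "\<delta> \<le> 1" using t by (auto simp: \<delta> field_simps)
  then have \<delta>_pi: "0 < \<delta>" "\<delta> \<le> 2 * pi" using pi_gt3 by auto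
  have "1 / (16 * (s + t)) \<ge> 1 / (32 * t)" using s t by (intro divide_left_mono) auto
  then have "1 / (240 * (s + t)) \<le> Efun (s + t) h"
    using Efun_lower_bound[of "s + t" h] s t h by linarith
  moreover have "1 / (480 * t) \<le> 1 / (240 * (s + t))" using s t by (intro divide_left_mono) auto
  moreover have "0 \<le> duhamel (neumann_sum (sector \<delta>)) t \<phi> s h"
    using s by (intro duhamel_nonneg neumann_sum_nonneg unit_profile_sector)
  ultimately have F: "1 / (480 * t) \<le> neumann_solution (sector \<delta>) t x \<phi> s h"
    using \<phi> by (simp add: neumann_solution_def sector_def)
  have "1 / (32 * t) \<le> 2" using t by (simp add: field_simps)
  then have "\<bar>h\<bar> \<le> 1" using h by linarith
  then have "mean (\<lambda>x \<phi>. sector \<delta> \<phi>) * Efun s h \<le> \<delta> / (2 * pi) * 32"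
    unfolding mean_sector[OF \<delta>_pi] using Efun_le_32[OF s(1)] \<delta>_pi by (intro mult_left_mono) auto
  also have "\<dots> \<le> 1 / (3000 * t)"
    using pi_gt3 t by (simp add: \<delta> field_simps)
  moreover have "1 / (960 * t) \<le> 1 / (480 * t) - 1 / (3000 * t)"
    using t by (simp add: field_simps)
  ultimately show ?thesis using F by linarith
qed

lemma L2sq_sector_lower_bound:
  assumes t: "1 \<le> t" and \<delta>: "\<delta> = 1 / (16000 * t)"
  shows "ennreal ((1 / (960 * t))^2 * (\<delta> / 32))
     \<le> L2sq (\<lambda>x \<phi> s h. neumann_solution (sector \<delta>) t x \<phi> s h - mean (\<lambda>x \<phi>. sector \<delta> \<phi>) * Efun s h)"
proof -
  define R where "R = cell \<times> {0..<\<delta>} \<times> {0..t} \<times> {1 - 1 / (32 * t)..1}"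
  have "0 < \<delta>" "\<delta> \<le> 1" "1 / (32 * t) \<le> 2" using t by (auto simp: \<delta> field_simps)
  then have small: "0 < \<delta>" "\<delta> \<le> 2 * pi" "1 / (32 * t) \<le> 2" using pi_gt3 by auto
  have R: "R \<in> sets borel" "R \<subseteq> Dom"
    using small by (auto simp: R_def Dom_def intro!: borel_Times cell_measurable)
  have "emeasure lborel R = ennreal \<delta> * (ennreal t * ennreal (1 / (32 * t)))"
    using small t by (simp add: R_def emeasure_lborel_Times borel_Times emeasure_cell)
  also have "\<dots> = ennreal (\<delta> / 32)"
    using small t by (simp add: ennreal_mult[symmetric])
  finally have measure_R: "emeasure lborel R = ennreal (\<delta> / 32)" .
  have excess: "1 / (960 * t) \<le> neumann_solution (sector \<delta>) t x \<phi> s h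
      - mean (\<lambda>x \<phi>. sector \<delta> \<phi>) * Efun s h" if "(x, \<phi>, s, h) \<in> R" for x \<phi> s h
    using that by (intro sector_solution_excess[OF t \<delta>]) (auto simp: R_def)
  have "ennreal ((1 / (960 * t))^2) * ennreal (\<delta> / 32)
      \<le> L2sq (\<lambda>x \<phi> s h. neumann_solution (sector \<delta>) t x \<phi> s h - mean (\<lambda>x \<phi>. sector \<delta> \<phi>) * Efun s h)"
    unfolding measure_R[symmetric] by (rule L2sq_lower_bound[OF R _ excess]) (use t in simp)
  moreover have "ennreal ((1 / (960 * t))^2 * (\<delta> / 32)) = ennreal ((1 / (960 * t))^2) * ennreal (\<delta> / 32)"
    using small by (intro ennreal_mult) auto
  ultimately show ?thesis by simp
qed

lemma decay_rate_lower_bound: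
  assumes H: "\<forall>f F. L2_data f \<longrightarrow> is_solution f F \<longrightarrow>
               (\<forall>t\<ge>0. L2sq (\<lambda>x \<phi> s h. F t x \<phi> s h - mean f * Efun s h)
                        \<le> ennreal ((\<Phi> t)^2) * L2sq (F 0))"
    and t: "1 \<le> t"
  shows "1 / (120795955200 * t^2) \<le> (\<Phi> t)^2"
proof -
  define \<delta> where "\<delta> = 1 / (16000 * t)"
  have \<delta>0: "0 < \<delta>" using t by (simp add: \<delta>_def)
  have "ennreal ((1 / (960 * t))^2 * (\<delta> / 32))
      \<le> L2sq (\<lambda>x \<phi> s h. neumann_solution (sector \<delta>) t x \<phi> s h - mean (\<lambda>x \<phi>. sector \<delta> \<phi>) * Efun s h)"
    using L2sq_sector_lower_bound[OF t \<delta>_def] .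
  also have "\<dots> \<le> ennreal ((\<Phi> t)^2) * L2sq (neumann_solution (sector \<delta>) 0)"
    by (rule H[rule_format, OF L2_data_sector neumann_solution_is_solution[OF unit_profile_sector]])
       (use t in simp)
  also have "\<dots> \<le> ennreal ((\<Phi> t)^2) * ennreal (4096 * \<delta>)"
    by (intro mult_left_mono L2sq_sector_initial \<delta>0) simp
  also have "\<dots> = ennreal ((\<Phi> t)^2 * (4096 * \<delta>))"
    using \<delta>0 by (simp add: ennreal_mult)
  finally have "(1 / (960 * t))^2 * (\<delta> / 32) \<le> (\<Phi> t)^2 * (4096 * \<delta>)"
    using \<delta>0 by (subst (asm) ennreal_le_iff) auto
  moreover have "(1 / (960 * t))^2 * (\<delta> / 32) = (4096 * \<delta>) * (1 / (120795955200 * t^2))"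
    by (simp add: power2_eq_square field_simps)
  ultimately have "(4096 * \<delta>) * (1 / (120795955200 * t^2)) \<le> (4096 * \<delta>) * (\<Phi> t)^2"
    by (metis mult.commute)
  then show ?thesis
    by (rule mult_left_le_imp_le) (use \<delta>0 in simp)
qed

lemma powr_minus_three_halves_squared:
  fixes t :: real
  assumes "0 < t"
  shows "(t powr (-3/2))^2 = 1 / t^3"
proof -
  have "(t powr (-3/2))^2 = t powr (-3/2 + -3/2)"
    unfolding power2_eq_square by (rule powr_add[symmetric])
  also have "\<dots> = inverse (t powr 3)"
    by (simp add: powr_minus)
  also have "t powr 3 = t^3"
    by (rule powr_numeral) (use assms in simp)
  also have "inverse (t^3) = 1 / t^3"
    by (rule inverse_eq_divide)
  finally show ?thesis .
qed

lemma not_smallo_of_inverse_lower_bound: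
  fixes \<Phi> :: "real \<Rightarrow> real"
  assumes K: "0 < K" and lower: "\<And>t. 1 \<le> t \<Longrightarrow> 1 / (K * t^2) \<le> (\<Phi> t)^2"
  shows "\<Phi> \<notin> o[at_top](\<lambda>t. t powr (-3/2))"
proof
  assume "\<Phi> \<in> o[at_top](\<lambda>t. t powr (-3/2))"
  then have "eventually (\<lambda>t. norm (\<Phi> t) \<le> 1 * norm (t powr (-3/2))) at_top"
    by (rule landau_o.smallD) simp
  then obtain N where N: "\<And>t. N \<le> t \<Longrightarrow> \<bar>\<Phi> t\<bar> \<le> t powr (-3/2)"
    by (auto simp: eventually_at_top_linorder)
  define t where "t = max N (K + 1)"
  have t: "K < t" "N \<le> t" "1 \<le> t" using K by (auto simp: t_def)
  have "(\<Phi> t)^2 = \<bar>\<Phi> t\<bar>^2" by simp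
  also have "\<dots> \<le> (t powr (-3/2))^2"
    by (rule power_mono[OF N[OF t(2)] abs_ge_zero])
  also have "\<dots> = 1 / t^3"
    by (rule powr_minus_three_halves_squared) (use t in simp)
  finally have "(\<Phi> t)^2 \<le> 1 / t^3" .
  moreover have "1 / (K * t^2) \<le> (\<Phi> t)^2"
    using t(3) by (rule lower)
  moreover have "K * t^2 < t^3"
    using mult_strict_right_mono[of K t "t^2"] t by (simp add: power2_eq_square power3_eq_cube mult.assoc)
  then have "1 / t^3 < 1 / (K * t^2)"
    using t K by (intro divide_strict_left_mono) simp_all
  ultimately show False by linarith
qed

theorem theorem3p5:
  shows "\<not> (\<exists>\<Phi> :: real \<Rightarrow> real.
            \<Phi> \<in> o[at_top](\<lambda>t. t powr (-3/2))
          \<and> (\<forall>f F. L2_data f \<longrightarrow> is_solution f F \<longrightarrow>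
               (\<forall>t\<ge>0. L2sq (\<lambda>x \<phi> s h. F t x \<phi> s h - mean f * Efun s h)
                        \<le> ennreal ((\<Phi> t)^2) * L2sq (F 0))))"
proof
  assume "\<exists>\<Phi> :: real \<Rightarrow> real.
            \<Phi> \<in> o[at_top](\<lambda>t. t powr (-3/2))
          \<and> (\<forall>f F. L2_data f \<longrightarrow> is_solution f F \<longrightarrow>
               (\<forall>t\<ge>0. L2sq (\<lambda>x \<phi> s h. F t x \<phi> s h - mean f * Efun s h)
                        \<le> ennreal ((\<Phi> t)^2) * L2sq (F 0)))"
  then obtain \<Phi> :: "real \<Rightarrow> real" where o: "\<Phi> \<in> o[at_top](\<lambda>t. t powr (-3/2))"
    and H: "\<forall>f F. L2_data f \<longrightarrow> is_solution f F \<longrightarrow>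
               (\<forall>t\<ge>0. L2sq (\<lambda>x \<phi> s h. F t x \<phi> s h - mean f * Efun s h)
                        \<le> ennreal ((\<Phi> t)^2) * L2sq (F 0))"
    by (elim exE conjE)
  have "\<Phi> \<notin> o[at_top](\<lambda>t. t powr (-3/2))"
    by (rule not_smallo_of_inverse_lower_bound[OF _ decay_rate_lower_bound[OF H]]) simp
  with o show False by contradiction
qed

end
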